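(* For $k \in \mathbb{N}_0$ and $N \in \mathbb{N}$ (with the convention that $(-1)!!=1$) it holds that \begin{equation*} \lim_{t \searrow 0} \frac{1}{t^k} G^{N,1}_{1,N} \left(\frac{1}{2^N t} \Bigg| \begin{matrix} 1-k \\ 1/2,1/2, \dots, 1/2 \end{matrix} \right) = \left[\sqrt{\pi}(2k-1)!!\right]^N. \end{equation*}
   Context: $n!!$ denotes the double factorial $n(n-2)(n-4)\cdots$. $G_{p,q}^{m,n}\left(z \Big| \begin{matrix} a_1,\ldots, a_p \\ b_1,\ldots, b_q\end{matrix}\right)$ is the Meijer G-function, defined by the contour integral $\frac{1}{2\pi \mathrm{i}} \int_{\mathcal{L}} \frac{\prod_{j=1}^m \Gamma(b_j+s) \prod_{i=1}^n \Gamma(1-a_i-s)}{\prod_{i=n+1}^p \Gamma(a_i+s) \prod_{j=m+1}^q \Gamma(1-b_j-s)} z^{-s} \, \mathrm{d} s$ over a contour $\mathcal{L}$ separating the poles of the $\Gamma(b_j+s)$ from those of the $\Gamma(1-a_i-s)$. It is derived from the fact that, for $Y=\prod_{i=1}^N g_i^2$ with $g_i$ iid standard Gaussian, $\mathbb{E}\, \mathrm{e}^{-tY} = \pi^{-N/2} G^{N,1}_{1,N}\left(\frac{1}{2^N t} \Big| \begin{matrix} 1 \\ 1/2,\dots,1/2\end{matrix}\right)$ for $t>0$ and $\mathbb{E}[Y^k]=[(2k-1)!!]^N$. *)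

theory Defs
  imports "HOL-Analysis.Analysis"
begin

text \<open>Double factorial n!! = n (n-2) (n-4) ..., with 0!! = 1!! = 1.
  Since nat subtraction truncates, dfact (2*0 - 1) = dfact 0 = 1,
  which realises the convention (-1)!! = 1.\<close>
fun dfact :: "nat \<Rightarrow> nat" where
  "dfact 0 = 1"
| "dfact (Suc 0) = 1"
| "dfact (Suc (Suc n)) = Suc (Suc n) * dfact n"

text \<open>Meijer G-function G^{m,n}_{p,q}(z | a_1..a_p ; b_1..b_q) for real z > 0,
  given by the contour integral (1/(2 pi i)) \<integral>_L ... z^(-s) ds where the contour L
  is the vertical line Re s = c (traversed upwards), s = c + i y.
  Parameters are indexed from 0: a 0, ..., a (p-1) and b 0, ..., b (q-1).
  With s = c + i y we have ds = i dy, so the prefactor becomes 1/(2 pi).\<close>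
definition meijerG_line ::
  "nat \<Rightarrow> nat \<Rightarrow> nat \<Rightarrow> nat \<Rightarrow> (nat \<Rightarrow> complex) \<Rightarrow> (nat \<Rightarrow> complex) \<Rightarrow> real \<Rightarrow> real \<Rightarrow> complex"
  where
  "meijerG_line m n p q a b c z =
     (LINT y|lborel.
        (let s = Complex c y in
          (\<Prod>j<m. Gamma (b j + s)) * (\<Prod>i<n. Gamma (1 - a i - s))
          * (\<Prod>i\<in>{n..<p}. rGamma (a i + s)) * (\<Prod>j\<in>{m..<q}. rGamma (1 - b j - s))
          * complex_of_real z powr (- s)))
     / complex_of_real (2 * pi)"

end

theory Submission
  imports Defs "HOL-Complex_Analysis.Complex_Analysis" "HOL-Probability.Sinc_Integral"
begin

text \<open>
  With w = 2^N t, the integrand of the Meijer G-function on the line Re s = c equals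
  -H(s)/(s - k), where H(s) = \<Gamma>(1/2 + s)^N \<Gamma>(k + 1 - s) w^s
  (\<open>meijer_numerator\<close>) is holomorphic on the strip -1/2 < Re s < k + 1.
  Moving the line of integration across the simple pole s = k to Re s = k + 1/2
  picks up the residue H(k) = \<Gamma>(k + 1/2)^N w^k = [\<surd>\<pi> (2k-1)!!]^N t^k, while the
  integral over the new line is O(w^(k+1/2)) = O(t^(k+1/2)), hence o(t^k).
  The shift is legitimate because |\<Gamma>(z)| \<le> \<Gamma>(Re z) makes H(s)/(s - k) decay like
  |s - k|^-2 uniformly in the strip, so the horizontal sides of the rectangles vanish.
\<close>

lemma pochhammer_Re_le_norm_pochhammer:
  fixes z :: complex
  assumes "Re z > 0"
  shows "pochhammer (Re z) n \<le> norm (pochhammer z n)"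
proof -
  have "pochhammer (Re z) n = (\<Prod>i<n. Re (z + of_nat i))"
    by (simp add: pochhammer_prod atLeast0LessThan)
  also have "\<dots> \<le> (\<Prod>i<n. norm (z + of_nat i))"
    using assms complex_Re_le_cmod[of "z + of_nat _"] by (intro prod_mono) auto
  also have "\<dots> = norm (pochhammer z n)"
    by (simp add: pochhammer_prod prod_norm atLeast0LessThan)
  finally show ?thesis .
qed

lemma norm_Gamma_le_Gamma_Re:
  fixes z :: complex
  assumes "Re z > 0"
  shows "norm (Gamma z) \<le> Gamma (Re z)"
proof (rule tendsto_le[OF trivial_limit_sequentially])
  show "(\<lambda>n. norm (Gamma_series z n)) \<longlonglongrightarrow> norm (Gamma z)"
    by (intro tendsto_norm Gamma_series_LIMSEQ)
  show "(\<lambda>n. Gamma_series (Re z) n) \<longlonglongrightarrow> Gamma (Re z)"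
    by (rule Gamma_series_LIMSEQ)
  show "\<forall>\<^sub>F n in sequentially. norm (Gamma_series z n) \<le> Gamma_series (Re z) n"
  proof (intro always_eventually allI)
    fix n
    have "pochhammer (Re z) (n + 1) > 0"
      using assms by (intro pochhammer_pos) auto
    then have "fact n * exp (Re z * ln (of_nat n)) / norm (pochhammer z (n + 1))
               \<le> fact n * exp (Re z * ln (of_nat n)) / pochhammer (Re z) (n + 1)"
      using pochhammer_Re_le_norm_pochhammer[OF assms, of "n + 1"]
      by (intro divide_left_mono mult_pos_pos) auto
    then show "norm (Gamma_series z n) \<le> Gamma_series (Re z) n"
      by (simp add: Gamma_series_def norm_divide norm_mult)
  qed
qed

lemma norm_Gamma_bounded_on_strip:
  fixes \<alpha> \<beta> :: real
  assumes "0 < \<alpha>"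
  obtains B where "\<And>z :: complex. \<alpha> \<le> Re z \<Longrightarrow> Re z \<le> \<beta> \<Longrightarrow> norm (Gamma z) \<le> B"
proof -
  have "{\<alpha>..\<beta>} \<inter> \<int>\<^sub>\<le>\<^sub>0 = {}"
    using assms by (auto elim!: nonpos_Ints_cases)
  then have "compact (Gamma ` {\<alpha>..\<beta>} :: real set)"
    by (intro compact_continuous_image continuous_on_Gamma) auto
  then obtain B where B: "\<forall>x\<in>Gamma ` {\<alpha>..\<beta>}. norm (x :: real) \<le> B"
    using compact_imp_bounded bounded_pos by metis
  show ?thesis
  proof (rule that)
    fix z :: complex
    assume "\<alpha> \<le> Re z" "Re z \<le> \<beta>"
    then show "norm (Gamma z) \<le> B"
      using assms B norm_Gamma_le_Gamma_Re[of z] by force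
  qed
qed

lemma norm_mult_norm_Gamma_bounded_on_strip:
  fixes \<alpha> \<beta> :: real
  assumes "0 < \<alpha>"
  obtains B where "\<And>z :: complex. \<alpha> \<le> Re z \<Longrightarrow> Re z \<le> \<beta> \<Longrightarrow> norm z * norm (Gamma z) \<le> B"
proof -
  obtain B where B: "\<And>z :: complex. \<alpha> + 1 \<le> Re z \<Longrightarrow> Re z \<le> \<beta> + 1 \<Longrightarrow> norm (Gamma z) \<le> B"
    using norm_Gamma_bounded_on_strip[of "\<alpha> + 1"] assms by auto
  show ?thesis
  proof (rule that)
    fix z :: complex
    assume z: "\<alpha> \<le> Re z" "Re z \<le> \<beta>"
    then have "z \<notin> \<int>\<^sub>\<le>\<^sub>0"
      using assms by (auto elim!: nonpos_Ints_cases)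
    then have "norm z * norm (Gamma z) = norm (Gamma (z + 1))"
      by (simp add: Gamma_plus1 norm_mult)
    also have "\<dots> \<le> B"
      using z by (intro B) simp_all
    finally show "norm z * norm (Gamma z) \<le> B" .
  qed
qed

lemma norm_exp_mult_of_real_le:
  assumes "a \<le> Re s" "Re s \<le> b"
  shows "norm (exp (s * of_real x)) \<le> exp (max (a * x) (b * x))"
proof -
  have "Re s * x \<le> max (a * x) (b * x)"
  proof (cases "0 \<le> x")
    case True
    then show ?thesis
      using assms(2) mult_right_mono[of "Re s" b x] by (simp add: le_max_iff_disj)
  next
    case False
    then show ?thesis
      using assms(1) mult_right_mono_neg[of a "Re s" x] by (simp add: le_max_iff_disj)
  qed
  then show ?thesis
    by simp
qed

lemma Gamma_half_dfact: "Gamma (real k + 1/2) * 2 ^ k = sqrt pi * real (dfact (2 * k - 1))"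
proof (induction k)
  case 0
  then show ?case by (simp add: Gamma_one_half_real)
next
  case (Suc k)
  have "real k + 1/2 \<notin> \<int>\<^sub>\<le>\<^sub>0"
    by (auto elim!: nonpos_Ints_cases)
  then have "Gamma (real (Suc k) + 1/2) = (real k + 1/2) * Gamma (real k + 1/2)"
    using Gamma_plus1[of "real k + 1/2"] by (simp add: add_ac)
  moreover have "dfact (2 * Suc k - 1) = (2 * k + 1) * dfact (2 * k - 1)"
    by (cases k) (auto simp: numeral_2_eq_2)
  ultimately show ?case
    using Suc.IH by (simp add: algebra_simps)
qed

lemma tendsto_integral_symmetric_interval:
  fixes g :: "real \<Rightarrow> complex"
  assumes g: "integrable lborel g"
  shows "(\<lambda>n. integral {-real n..real n} g) \<longlonglongrightarrow> (LINT y|lborel. g y)"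
proof -
  have "integral {-real n..real n} g = (LINT y|lborel. indicator {-real n..real n} y *\<^sub>R g y)" for n
  proof -
    have "set_integrable lborel {-real n..real n} g"
      unfolding set_integrable_def by (intro integrable_mult_indicator g) auto
    from set_borel_integral_eq_integral(2)[OF this] show ?thesis
      by (simp add: set_lebesgue_integral_def)
  qed
  moreover have "(\<lambda>n. LINT y|lborel. indicator {-real n..real n} y *\<^sub>R g y) \<longlonglongrightarrow> (LINT y|lborel. g y)"
  proof (rule integral_dominated_convergence[where w = "\<lambda>y. norm (g y)"])
    show "AE y in lborel. (\<lambda>n. indicator {-real n..real n} y *\<^sub>R g y) \<longlonglongrightarrow> g y"
    proof (rule AE_I2)
      fix y :: real
      obtain m :: nat where m: "\<bar>y\<bar> \<le> real m"
        using real_arch_simple by blast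
      have "\<forall>\<^sub>F n in sequentially. indicator {-real n..real n} y *\<^sub>R g y = g y"
        using eventually_ge_at_top[of m]
        by eventually_elim (use m in \<open>auto simp: indicator_def abs_le_iff\<close>)
      then show "(\<lambda>n. indicator {-real n..real n} y *\<^sub>R g y) \<longlonglongrightarrow> g y"
        by (rule tendsto_eventually)
    qed
  qed (use g in \<open>auto simp: indicator_def\<close>)
  ultimately show ?thesis
    by simp
qed

lemma contour_integral_rectpath_eq_sides:
  fixes f :: "complex \<Rightarrow> complex" and a b c d :: real
  assumes "c < d" "continuous_on (path_image (rectpath (Complex a c) (Complex b d))) f"
  shows "contour_integral (rectpath (Complex a c) (Complex b d)) f
       = contour_integral (linepath (Complex a c) (Complex b c)) f
         + \<i> * integral {c..d} (\<lambda>y. f (Complex b y))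
         + contour_integral (linepath (Complex b d) (Complex a d)) f
         - \<i> * integral {c..d} (\<lambda>y. f (Complex a y))"
proof -
  define z1 z2 z3 z4 where "z1 = Complex a c" and "z2 = Complex b c"
    and "z3 = Complex b d" and "z4 = Complex a d"
  have rect: "rectpath z1 z3 = linepath z1 z2 +++ linepath z2 z3 +++ linepath z3 z4 +++ linepath z4 z1"
    by (simp add: rectpath_def Let_def z1_def z2_def z3_def z4_def)
  have cont: "continuous_on (closed_segment u v) f"
    if "closed_segment u v \<subseteq> path_image (rectpath z1 z3)" for u v
    using that unfolding z1_def z3_def by (rule continuous_on_subset[OF assms(2)])
  have "(f has_contour_integral contour_integral (linepath z1 z2) f + (contour_integral (linepath z2 z3) f
         + (contour_integral (linepath z3 z4) f + contour_integral (linepath z4 z1) f))) (rectpath z1 z3)"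
    unfolding rect
    by (intro has_contour_integral_join has_contour_integral_integral
        contour_integrable_continuous_linepath cont valid_path_join valid_path_linepath)
      (auto simp: rect path_image_join)
  moreover have "contour_integral (linepath z2 z3) f = \<i> * integral {c..d} (\<lambda>y. f (Complex b y))"
    using assms by (intro contour_integral_linepath_same_Re) (auto simp: z2_def z3_def)
  moreover have "contour_integral (linepath z4 z1) f = - contour_integral (linepath z1 z4) f"
    by (intro contour_integral_reverse_linepath cont) (auto simp: rect path_image_join)
  moreover have "contour_integral (linepath z1 z4) f = \<i> * integral {c..d} (\<lambda>y. f (Complex a y))"
    using assms by (intro contour_integral_linepath_same_Re) (auto simp: z1_def z4_def)
  ultimately show ?thesis
    by (simp add: contour_integral_unique z1_def z2_def z3_def z4_def algebra_simps)
qed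

context
  fixes g :: "complex \<Rightarrow> complex" and a b p B :: real
  assumes holo: "g holomorphic_on {s. a \<le> Re s \<and> Re s \<le> b}"
    and bound: "\<And>s. a \<le> Re s \<Longrightarrow> Re s \<le> b \<Longrightarrow> norm (g s) * norm (s - of_real p) \<le> B"
begin

lemma continuous_on_div_pole:
  "continuous_on ({s. a \<le> Re s \<and> Re s \<le> b} - {of_real p}) (\<lambda>s. g s / (s - of_real p))"
  by (intro continuous_intros holomorphic_on_imp_continuous_on
        holomorphic_on_subset[OF holo]) auto

lemma norm_div_pole_le:
  assumes "a \<le> Re s" "Re s \<le> b" "s \<noteq> of_real p"
  shows "norm (g s / (s - of_real p)) \<le> B / norm (s - of_real p) ^ 2"
proof -
  have "norm (s - of_real p) > 0"
    using assms by simp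
  then show ?thesis
    using bound[OF assms(1,2)] by (simp add: norm_divide field_simps power2_eq_square)
qed

lemma integrable_vertical_line:
  assumes "a \<le> x" "x \<le> b" "x \<noteq> p"
  shows "integrable lborel (\<lambda>y. g (Complex x y) / (Complex x y - of_real p))"
proof (rule Bochner_Integration.integrable_bound)
  define d where "d = min 1 ((x - p)\<^sup>2)"
  have d: "d > 0" "d \<le> 1" "d \<le> (x - p)\<^sup>2"
    using assms by (auto simp: d_def)
  have "0 \<le> B"
    using assms by (intro order.trans[OF _ bound[of "of_real x"]]) simp_all
  show "integrable lborel (\<lambda>y. B / d * inverse (1 + y\<^sup>2))"
    using integrable_inverse_1_plus_square
    by (intro integrable_mult_right) (simp add: set_integrable_def einterval_eq_UNIV)
  have "continuous_on UNIV (\<lambda>y. g (Complex x y) / (Complex x y - of_real p))"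
    using assms by (intro continuous_on_compose2[OF continuous_on_div_pole])
      (auto simp: Complex_eq complex_eq_iff intro!: continuous_intros)
  then show "(\<lambda>y. g (Complex x y) / (Complex x y - of_real p)) \<in> borel_measurable lborel"
    by (simp add: borel_measurable_continuous_onI)
  show "AE y in lborel. norm (g (Complex x y) / (Complex x y - of_real p))
                       \<le> norm (B / d * inverse (1 + y\<^sup>2))"
  proof (rule AE_I2)
    fix y :: real
    have "d * (1 + y\<^sup>2) \<le> (x - p)\<^sup>2 + y\<^sup>2"
      using d mult_left_le_one_le[of "y\<^sup>2" d] by (simp add: algebra_simps)
    then have "B / norm (Complex x y - of_real p) ^ 2 \<le> B / (d * (1 + y\<^sup>2))"
      using \<open>0 \<le> B\<close> d assms
      by (intro divide_left_mono) (auto simp: cmod_power2 intro!: mult_pos_pos add_pos_nonneg)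
    also have "\<dots> = norm (B / d * inverse (1 + y\<^sup>2))"
      using \<open>0 \<le> B\<close> d by (simp add: field_simps abs_of_pos add_pos_nonneg)
    finally show "norm (g (Complex x y) / (Complex x y - of_real p)) \<le> norm (B / d * inverse (1 + y\<^sup>2))"
      using norm_div_pole_le[of "Complex x y"] assms by (force simp: complex_eq_iff)
  qed
qed

lemma norm_horizontal_segment_integral_le:
  assumes "a \<le> u" "u \<le> b" "a \<le> v" "v \<le> b" "y \<noteq> 0"
  shows "norm (contour_integral (linepath (Complex u y) (Complex v y)) (\<lambda>s. g s / (s - of_real p)))
         \<le> B / y\<^sup>2 * \<bar>v - u\<bar>"
proof -
  have seg: "closed_segment (Complex u y) (Complex v y) \<subseteq> {s. a \<le> Re s \<and> Re s \<le> b} - {of_real p}"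
    using assms by (auto simp: closed_segment_same_Im closed_segment_eq_real_ivl split: if_splits)
  have "norm (contour_integral (linepath (Complex u y) (Complex v y)) (\<lambda>s. g s / (s - of_real p)))
        \<le> B / y\<^sup>2 * norm (Complex v y - Complex u y)"
  proof (rule contour_integral_bound_linepath)
    show "(\<lambda>s. g s / (s - of_real p)) contour_integrable_on linepath (Complex u y) (Complex v y)"
      by (intro contour_integrable_continuous_linepath continuous_on_subset[OF continuous_on_div_pole seg])
    show "0 \<le> B / y\<^sup>2"
      using assms by (intro divide_nonneg_pos order.trans[OF _ bound[of "of_real u"]]) simp_all
    fix s
    assume "s \<in> closed_segment (Complex u y) (Complex v y)"
    then have s: "a \<le> Re s" "Re s \<le> b" "Im s = y" "s \<noteq> of_real p"
      using seg by (auto simp: closed_segment_same_Im)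
    have "y\<^sup>2 \<le> norm (s - of_real p) ^ 2"
      using s by (simp add: cmod_power2)
    then have "B / norm (s - of_real p) ^ 2 \<le> B / y\<^sup>2"
      using \<open>0 \<le> B / y\<^sup>2\<close> assms s(4)
      by (intro divide_left_mono) (auto simp: zero_le_divide_iff intro!: mult_pos_pos)
    then show "norm (g s / (s - of_real p)) \<le> B / y\<^sup>2"
      using norm_div_pole_le[OF s(1,2,4)] by linarith
  qed
  also have "norm (Complex v y - Complex u y) = \<bar>v - u\<bar>"
    by (simp add: cmod_def)
  finally show ?thesis .
qed

lemma rectangle_residue:
  assumes "a < p" "p < b" "T > 0"
  shows "contour_integral (linepath (Complex a (-T)) (Complex b (-T))) (\<lambda>s. g s / (s - of_real p))
       + \<i> * integral {-T..T} (\<lambda>y. g (Complex b y) / (Complex b y - of_real p))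
       + contour_integral (linepath (Complex b T) (Complex a T)) (\<lambda>s. g s / (s - of_real p))
       - \<i> * integral {-T..T} (\<lambda>y. g (Complex a y) / (Complex a y - of_real p))
       = 2 * pi * \<i> * g (of_real p)"
proof -
  define S where "S = {s. a \<le> Re s \<and> Re s \<le> b}"
  define \<gamma> where "\<gamma> = rectpath (Complex a (-T)) (Complex b T)"
  have "convex S"
    unfolding S_def using convex_Int[OF convex_halfspace_Re_ge convex_halfspace_Re_le]
    by (simp add: Collect_conj_eq)
  have "of_real p \<in> interior S"
    using assms by (intro interiorI[of "{s. a < Re s \<and> Re s < b}"])
      (auto simp: S_def Collect_conj_eq intro!: open_Int open_halfspace_Re_gt open_halfspace_Re_lt)
  have image: "path_image \<gamma> \<subseteq> S - {of_real p}"
    using assms unfolding \<gamma>_def by (subst path_image_rectpath) (auto simp: S_def complex_eq_iff)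
  have "winding_number \<gamma> (of_real p) = 1"
    using assms unfolding \<gamma>_def by (intro winding_number_rectpath) (auto simp: in_box_complex_iff)
  then have "((\<lambda>s. g s / (s - of_real p)) has_contour_integral 2 * pi * \<i> * g (of_real p)) \<gamma>"
    using Cauchy_integral_formula_convex_simple[OF \<open>convex S\<close> holo[folded S_def]
        \<open>of_real p \<in> interior S\<close> valid_path_rectpath image[unfolded \<gamma>_def]]
    by (simp add: \<gamma>_def)
  then have "contour_integral \<gamma> (\<lambda>s. g s / (s - of_real p)) = 2 * pi * \<i> * g (of_real p)"
    by (rule contour_integral_unique)
  moreover have "continuous_on (path_image \<gamma>) (\<lambda>s. g s / (s - of_real p))"
    using continuous_on_div_pole image unfolding S_def by (rule continuous_on_subset)
  ultimately show ?thesis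
    unfolding \<gamma>_def using assms by (simp add: contour_integral_rectpath_eq_sides)
qed

lemma vertical_line_integral_shift_past_pole:
  assumes "a < p" "p < b"
  shows "(LINT y|lborel. g (Complex a y) / (Complex a y - of_real p))
       = (LINT y|lborel. g (Complex b y) / (Complex b y - of_real p)) - 2 * pi * g (of_real p)"
proof -
  define F where "F x T = integral {-T..T} (\<lambda>y. g (Complex x y) / (Complex x y - of_real p))"
    for x T :: real
  define L where "L x = (LINT y|lborel. g (Complex x y) / (Complex x y - of_real p))" for x
  define D where "D n = \<i> * F b (real n) - \<i> * F a (real n) - 2 * pi * \<i> * g (of_real p)" for n
  have "D \<longlonglongrightarrow> \<i> * L b - \<i> * L a - 2 * pi * \<i> * g (of_real p)"
    unfolding D_def F_def L_def using assms
    by (intro tendsto_intros tendsto_integral_symmetric_interval integrable_vertical_line) auto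
  moreover have "D \<longlonglongrightarrow> 0"
  proof (rule Lim_null_comparison)
    show "\<forall>\<^sub>F n in sequentially. norm (D n) \<le> 2 * (b - a) * B / (real n)\<^sup>2"
      using eventually_gt_at_top[of "0::nat"]
    proof eventually_elim
      case (elim n)
      let ?f = "\<lambda>s. g s / (s - of_real p)"
      have "D n = - (contour_integral (linepath (Complex a (-n)) (Complex b (-n))) ?f
                    + contour_integral (linepath (Complex b n) (Complex a n)) ?f)"
        using rectangle_residue[of "real n"] assms elim by (simp add: D_def F_def algebra_simps)
      also have "norm \<dots> \<le> B / (real n)\<^sup>2 * (b - a) + B / (real n)\<^sup>2 * (b - a)"
        unfolding norm_minus_cancel using assms elim
        by (intro norm_triangle_le add_mono order.trans[OF norm_horizontal_segment_integral_le]) auto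
      finally show ?case
        by (simp add: field_simps)
    qed
    show "(\<lambda>n. 2 * (b - a) * B / (real n)\<^sup>2) \<longlonglongrightarrow> 0"
      by (intro tendsto_divide_0[OF tendsto_const] filterlim_at_top_imp_at_infinity
          filterlim_pow_at_top filterlim_real_sequentially) auto
  qed
  ultimately have "\<i> * (L b - L a - 2 * pi * g (of_real p)) = 0"
    using LIMSEQ_unique by (fastforce simp: algebra_simps)
  then have "L a = L b - 2 * pi * g (of_real p)"
    by (simp add: right_diff_distrib[symmetric]) algebra
  then show ?thesis
    by (simp add: L_def)
qed

end

definition meijer_numerator :: "nat \<Rightarrow> nat \<Rightarrow> real \<Rightarrow> complex \<Rightarrow> complex" where
  "meijer_numerator k N w s = Gamma (1/2 + s) ^ N * Gamma (of_nat k + 1 - s) * exp (s * of_real (ln w))"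

lemma meijer_numerator_holomorphic:
  "meijer_numerator k N w holomorphic_on {s. -1/2 < Re s \<and> Re s < real k + 1}"
  unfolding meijer_numerator_def[abs_def]
  by (intro holomorphic_intros) (auto elim!: nonpos_Ints_cases simp: complex_eq_iff)

lemma meijer_numerator_bound:
  fixes a b w :: real
  assumes "-1/2 < a" "b \<le> real k + 1/2"
  obtains B where
    "\<And>s. a \<le> Re s \<Longrightarrow> Re s \<le> b \<Longrightarrow> norm (meijer_numerator k N w s) * norm (s - of_nat k) \<le> B"
proof -
  obtain B1 where B1: "\<And>z :: complex. 1/2 + a \<le> Re z \<Longrightarrow> Re z \<le> 1/2 + b \<Longrightarrow> norm (Gamma z) \<le> B1"
    using norm_Gamma_bounded_on_strip[of "1/2 + a" "1/2 + b"] assms by auto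
  obtain B2 where B2: "\<And>z :: complex. real k + 1 - b \<le> Re z \<Longrightarrow> Re z \<le> real k + 1 - a
      \<Longrightarrow> norm z * norm (Gamma z) \<le> B2"
    using norm_mult_norm_Gamma_bounded_on_strip[of "real k + 1 - b" "real k + 1 - a"] assms by auto
  show ?thesis
  proof (rule that)
    fix s :: complex
    assume s: "a \<le> Re s" "Re s \<le> b"
    have Gamma1: "norm (Gamma (1/2 + s)) \<le> B1"
      using s by (intro B1) simp_all
    have "(Re s - real k)\<^sup>2 \<le> (real k + 1 - Re s)\<^sup>2"
      using s assms by (simp add: power2_eq_square algebra_simps)
    then have "norm (s - of_nat k) ^ 2 \<le> norm (of_nat k + 1 - s) ^ 2"
      by (simp add: cmod_power2)
    then have "norm (s - of_nat k) \<le> norm (of_nat k + 1 - s)"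
      by (rule power2_le_imp_le) simp
    then have "norm (s - of_nat k) * norm (Gamma (of_nat k + 1 - s))
               \<le> norm (of_nat k + 1 - s) * norm (Gamma (of_nat k + 1 - s))"
      by (rule mult_right_mono) simp
    also have "\<dots> \<le> B2"
      using s by (intro B2) simp_all
    finally have Gamma2: "norm (s - of_nat k) * norm (Gamma (of_nat k + 1 - s)) \<le> B2" .
    have "0 \<le> B1" "0 \<le> B2"
      using Gamma1 Gamma2 by (meson mult_nonneg_nonneg norm_ge_zero order.trans)+
    have "norm (Gamma (1/2 + s)) ^ N * (norm (s - of_nat k) * norm (Gamma (of_nat k + 1 - s)))
          * norm (exp (s * of_real (ln w))) \<le> B1 ^ N * B2 * exp (max (a * ln w) (b * ln w))"
      using Gamma1 Gamma2 s \<open>0 \<le> B1\<close> \<open>0 \<le> B2\<close>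
      by (intro mult_mono power_mono norm_exp_mult_of_real_le) simp_all
    then show "norm (meijer_numerator k N w s) * norm (s - of_nat k)
               \<le> B1 ^ N * B2 * exp (max (a * ln w) (b * ln w))"
      by (simp add: meijer_numerator_def norm_mult norm_power mult_ac)
  qed
qed

lemma meijerG_integrand_eq:
  assumes "Re s < real k" "w > 0"
  shows "Gamma (1/2 + s) ^ N * Gamma (of_nat k - s) * (1 / complex_of_real w) powr (- s)
       = - (meijer_numerator k N w s / (s - of_nat k))"
proof -
  have "of_nat k - s \<notin> \<int>\<^sub>\<le>\<^sub>0"
    using assms by (auto elim!: nonpos_Ints_cases simp: complex_eq_iff)
  then have Gamma_eq: "Gamma (of_nat k + 1 - s) = (of_nat k - s) * Gamma (of_nat k - s)"
    using Gamma_plus1[of "of_nat k - s"] by (simp add: algebra_simps)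
  have "Ln (1 / complex_of_real w) = - of_real (ln w)"
    using Ln_of_real[of "1 / w"] assms by (simp add: ln_div)
  then have powr_eq: "(1 / complex_of_real w) powr (- s) = exp (s * of_real (ln w))"
    using assms by (simp add: powr_def)
  have "meijer_numerator k N w s / (s - of_nat k)
      = Gamma (1/2 + s) ^ N * Gamma (of_nat k - s) * (1 / complex_of_real w) powr (- s)
        * ((of_nat k - s) / (s - of_nat k))"
    unfolding meijer_numerator_def Gamma_eq powr_eq by (simp add: mult_ac)
  moreover have "(of_nat k - s) / (s - of_nat k) = -1"
    using assms by (intro divide_eq_minus_1_iff[THEN iffD2]) auto
  ultimately show ?thesis
    by simp
qed

lemma meijerG_line_eq_integral_meijer_numerator:
  assumes "c < real k" "w > 0"
  shows "meijerG_line N 1 1 N (\<lambda>_. 1 - of_nat k) (\<lambda>_. 1/2) c (1 / w)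
       = - (LINT y|lborel. meijer_numerator k N w (Complex c y) / (Complex c y - of_nat k))
         / complex_of_real (2 * pi)"
  unfolding meijerG_line_def
  using assms by (simp add: Let_def meijerG_integrand_eq flip: Bochner_Integration.integral_minus)

lemma meijer_numerator_at_pole:
  assumes "w > 0"
  shows "meijer_numerator k N w (of_nat k) = of_real (Gamma (real k + 1/2) ^ N * w ^ k)"
proof -
  have "Gamma (1/2 + of_nat k :: complex) = of_real (Gamma (real k + 1/2))"
    using Gamma_complex_of_real[of "real k + 1/2"] by (simp add: add_ac)
  moreover have "exp (complex_of_real (ln w)) = of_real w"
    using assms by (simp add: exp_of_real)
  then have "exp (of_nat k * complex_of_real (ln w)) = of_real (w ^ k)"
    by (simp add: exp_of_nat_mult)
  ultimately show ?thesis
    by (simp add: meijer_numerator_def)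
qed

lemma norm_meijer_numerator:
  assumes "w > 0"
  shows "norm (meijer_numerator k N w s) = norm (meijer_numerator k N 1 s) * w powr Re s"
proof -
  have "norm (exp (s * of_real (ln w))) = w powr Re s"
    using assms by (simp add: powr_def mult.commute)
  then show ?thesis
    by (simp add: meijer_numerator_def norm_mult)
qed

lemma meijerG_line_eq_residue_minus_shifted:
  assumes "-1/2 < c" "c < real k" "w > 0"
  shows "meijerG_line N 1 1 N (\<lambda>_. 1 - of_nat k) (\<lambda>_. 1/2) c (1 / w)
       = of_real (Gamma (real k + 1/2) ^ N * w ^ k)
         - (LINT y|lborel. meijer_numerator k N w (Complex (real k + 1/2) y)
                           / (Complex (real k + 1/2) y - of_nat k)) / complex_of_real (2 * pi)"
proof -
  obtain B where B: "\<And>s. c \<le> Re s \<Longrightarrow> Re s \<le> real k + 1/2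
      \<Longrightarrow> norm (meijer_numerator k N w s) * norm (s - of_real (real k)) \<le> B"
    using meijer_numerator_bound[of c "real k + 1/2" k N w] assms by auto
  have "meijer_numerator k N w holomorphic_on {s. c \<le> Re s \<and> Re s \<le> real k + 1/2}"
    using assms by (intro holomorphic_on_subset[OF meijer_numerator_holomorphic]) auto
  from vertical_line_integral_shift_past_pole[OF this B] assms
  have "(LINT y|lborel. meijer_numerator k N w (Complex c y) / (Complex c y - of_nat k))
      = (LINT y|lborel. meijer_numerator k N w (Complex (real k + 1/2) y)
                        / (Complex (real k + 1/2) y - of_nat k))
        - 2 * pi * meijer_numerator k N w (of_nat k)"
    by simp
  then show ?thesis
    unfolding meijerG_line_eq_integral_meijer_numerator[OF assms(2,3)]
    using assms by (simp add: meijer_numerator_at_pole diff_divide_distrib)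
qed

lemma norm_integral_meijer_numerator_le:
  assumes "w > 0"
  shows "norm (LINT y|lborel. meijer_numerator k N w (Complex x y) / (Complex x y - of_nat k))
       \<le> w powr x * (LINT y|lborel. norm (meijer_numerator k N 1 (Complex x y) / (Complex x y - of_nat k)))"
proof -
  have "norm (LINT y|lborel. meijer_numerator k N w (Complex x y) / (Complex x y - of_nat k))
      \<le> (LINT y|lborel. norm (meijer_numerator k N w (Complex x y) / (Complex x y - of_nat k)))"
    by (rule integral_norm_bound)
  also have "\<dots> = (LINT y|lborel. w powr x * norm (meijer_numerator k N 1 (Complex x y) / (Complex x y - of_nat k)))"
    by (simp add: norm_meijer_numerator[OF assms] norm_divide mult.commute)
  also have "\<dots> = w powr x * (LINT y|lborel. norm (meijer_numerator k N 1 (Complex x y) / (Complex x y - of_nat k)))"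
    by (rule integral_mult_right_zero)
  finally show ?thesis .
qed

lemma shifted_meijer_integral_tendsto_0:
  "((\<lambda>t. (LINT y|lborel. meijer_numerator k N (2 ^ N * t) (Complex (real k + 1/2) y)
                           / (Complex (real k + 1/2) y - of_nat k)) / complex_of_real (2 * pi * t ^ k))
    \<longlongrightarrow> 0) (at_right 0)"
proof -
  define b where "b = real k + 1/2"
  define L where "L = (\<lambda>t. (LINT y|lborel. meijer_numerator k N (2 ^ N * t) (Complex b y)
                                        / (Complex b y - of_nat k)) / complex_of_real (2 * pi * t ^ k))"
  define K where "K = (LINT y|lborel. norm (meijer_numerator k N 1 (Complex b y) / (Complex b y - of_nat k)))
                      * 2 powr (N * b) / (2 * pi)"
  have L_bound: "norm (L t) \<le> K * sqrt t" if "t > 0" for t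
  proof -
    let ?I = "LINT y|lborel. meijer_numerator k N (2 ^ N * t) (Complex b y) / (Complex b y - of_nat k)"
    have "norm (L t) = norm ?I / (2 * pi * t ^ k)"
      using that by (simp only: L_def norm_divide norm_of_real) simp
    also have "\<dots> \<le> (2 ^ N * t) powr b
        * (LINT y|lborel. norm (meijer_numerator k N 1 (Complex b y) / (Complex b y - of_nat k)))
        / (2 * pi * t ^ k)"
      using that by (intro divide_right_mono norm_integral_meijer_numerator_le) simp_all
    also have "(2 ^ N * t) powr b = 2 powr (N * b) * sqrt t * t ^ k"
      using that by (simp add: b_def powr_mult powr_add powr_realpow powr_half_sqrt powr_powr
          distrib_left flip: powr_realpow)
    finally show ?thesis
      using that by (simp add: K_def field_simps)
  qed
  have "(L \<longlongrightarrow> 0) (at_right 0)"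
  proof (rule Lim_null_comparison)
    show "\<forall>\<^sub>F t in at_right 0. norm (L t) \<le> K * sqrt t"
      using eventually_at_right_less[of "0::real"] by eventually_elim (rule L_bound)
    have "((\<lambda>t. K * sqrt t) \<longlongrightarrow> K * sqrt 0) (at_right 0)"
      by (intro tendsto_intros)
    then show "((\<lambda>t. K * sqrt t) \<longlongrightarrow> 0) (at_right 0)"
      by simp
  qed
  then show ?thesis
    unfolding L_def b_def .
qed

lemma meijerG_line_over_power_eq:
  assumes "-1/2 < c" "c < real k" "t > 0"
  shows "meijerG_line N 1 1 N (\<lambda>_. 1 - of_nat k) (\<lambda>_. 1/2) c (1 / (2 ^ N * t)) / complex_of_real (t ^ k)
       = complex_of_real ((sqrt pi * real (dfact (2 * k - 1))) ^ N)
         - (LINT y|lborel. meijer_numerator k N (2 ^ N * t) (Complex (real k + 1/2) y)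
                           / (Complex (real k + 1/2) y - of_nat k)) / complex_of_real (2 * pi * t ^ k)"
proof -
  have "Gamma (real k + 1/2) ^ N * (2 ^ N * t) ^ k = (Gamma (real k + 1/2) * 2 ^ k) ^ N * t ^ k"
    by (simp add: power_mult_distrib flip: power_mult)
  then show ?thesis
    using meijerG_line_eq_residue_minus_shifted[of c k "2 ^ N * t" N] assms
    by (simp add: Gamma_half_dfact diff_divide_distrib)
qed

theorem corollary1:
  fixes k N :: nat and c :: real
  assumes "N \<ge> 1"
    and "-1/2 < c" and "c < real k"
  shows "((\<lambda>t::real. meijerG_line N 1 1 N (\<lambda>_. 1 - of_nat k) (\<lambda>_. 1/2) c (1 / (2 ^ N * t))
                      / complex_of_real (t ^ k))
          \<longlongrightarrow> complex_of_real ((sqrt pi * real (dfact (2 * k - 1))) ^ N)) (at_right 0)"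
proof -
  define C where "C = complex_of_real ((sqrt pi * real (dfact (2 * k - 1))) ^ N)"
  define R where "R = (\<lambda>t. (LINT y|lborel. meijer_numerator k N (2 ^ N * t) (Complex (real k + 1/2) y)
                         / (Complex (real k + 1/2) y - of_nat k)) / complex_of_real (2 * pi * t ^ k))"
  have "((\<lambda>t. C - R t) \<longlongrightarrow> C - 0) (at_right 0)"
    unfolding R_def by (intro tendsto_intros shifted_meijer_integral_tendsto_0)
  moreover have "\<forall>\<^sub>F t in at_right 0. C - R t
      = meijerG_line N 1 1 N (\<lambda>_. 1 - of_nat k) (\<lambda>_. 1/2) c (1 / (2 ^ N * t)) / complex_of_real (t ^ k)"
    using eventually_at_right_less[of "0::real"]
    by eventually_elim (unfold C_def R_def, rule meijerG_line_over_power_eq[OF assms(2,3), symmetric])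
  ultimately show ?thesis
    unfolding C_def by (simp add: Lim_transform_eventually)
qed

end
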